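(* Let $u>v\geq 1$ be integers. Then $$\langle u+v,u+v,u+v\rangle\;\leq\;\langle u,u,u\rangle+3\,\langle u,u,v\rangle+3\,\langle v,v,u\rangle .$$
   Context: Fix a field $\mathbb{K}$. For positive integers $a,b,c$, $\langle a,b,c\rangle$ denotes the minimal number of multiplications of a non-commutative bilinear algorithm computing the product of an $a\times b$ matrix $A$ by a $b\times c$ matrix $B$. Such an algorithm consists of $r$ products $t_k=\big(\sum_{i,j}\alpha^{(k)}_{ij}a_{ij}\big)\big(\sum_{j,l}\beta^{(k)}_{jl}b_{jl}\big)$ with $\alpha^{(k)}_{ij},\beta^{(k)}_{jl}\in\mathbb{K}$, together with scalars $\gamma^{(k)}_{il}\in\mathbb{K}$ such that $(AB)_{il}=\sum_{k=1}^r\gamma^{(k)}_{il}t_k$ for all $i,l$. This identity must hold when the entries of $A$ and $B$ are taken in an arbitrary, not necessarily commutative, associative $\mathbb{K}$-algebra. Equivalently, $\langle a,b,c\rangle$ is the tensor rank of the matrix multiplication tensor of format $(a,b,c)$. *)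

theory Defs
  imports Main
begin

text \<open>A bilinear algorithm with r products for multiplying an a x b matrix by a
  b x c matrix over the field 'k, in its tensor-decomposition form:
  the k-th product is (sum alpha k i j * A i j) * (sum beta k j l * B j l) and
  (AB) i l = sum_k gamma k i l * t_k.  The identity in arbitrary (noncommutative)
  associative algebras is equivalent to the following coefficient identity
  (the matrix multiplication tensor decomposition).\<close>

definition mm_algorithm ::
  "nat \<Rightarrow> nat \<Rightarrow> nat \<Rightarrow> nat \<Rightarrow>
   (nat \<Rightarrow> nat \<Rightarrow> nat \<Rightarrow> 'k::field) \<Rightarrow>
   (nat \<Rightarrow> nat \<Rightarrow> nat \<Rightarrow> 'k) \<Rightarrow>
   (nat \<Rightarrow> nat \<Rightarrow> nat \<Rightarrow> 'k) \<Rightarrow> bool" where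
  "mm_algorithm a b c r \<alpha> \<beta> \<gamma> \<longleftrightarrow>
     (\<forall>i<a. \<forall>j<b. \<forall>j'<b. \<forall>l<c. \<forall>i'<a. \<forall>l'<c.
        (\<Sum>k<r. \<alpha> k i j * \<beta> k j' l * \<gamma> k i' l') =
        (if j = j' \<and> i = i' \<and> l = l' then 1 else 0))"

definition mm_rank :: "'k::field itself \<Rightarrow> nat \<Rightarrow> nat \<Rightarrow> nat \<Rightarrow> nat" where
  "mm_rank _ a b c =
     (LEAST r. \<exists>(\<alpha>::nat \<Rightarrow> nat \<Rightarrow> nat \<Rightarrow> 'k) \<beta> \<gamma>. mm_algorithm a b c r \<alpha> \<beta> \<gamma>)"

end

theory Submission
  imports Defs
begin

text \<open>Split a \<open>(u+v) \<times> (u+v)\<close> matrix into blocks of sizes \<open>u\<close> and \<open>v\<close> and apply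
  Strassen's seven-product algorithm for \<open>2 \<times> 2\<close> matrices to the blocks, computing each
  block product by an optimal algorithm for suitably zero-padded blocks. Inspecting which
  blocks enter each Strassen product shows that its three dimensions can be taken from
  \<open>{u, v}\<close>: the formats are \<open>uuu, vuu, uuv, vvu, uvv, vuv, uvu\<close>. Since the rank of matrix
  multiplication is invariant under cyclic permutation of the format, the six formats
  other than \<open>uuu\<close> have ranks bounded by those of \<open>uuv\<close> (three times) and \<open>vvu\<close> (three times).\<close>

definition mm_decomposition :: "nat \<Rightarrow> nat \<Rightarrow> nat \<Rightarrow> 'i set \<Rightarrow>
   ('i \<Rightarrow> nat \<Rightarrow> nat \<Rightarrow> 'k::field) \<Rightarrow>
   ('i \<Rightarrow> nat \<Rightarrow> nat \<Rightarrow> 'k) \<Rightarrow> ('i \<Rightarrow> nat \<Rightarrow> nat \<Rightarrow> 'k) \<Rightarrow> bool" where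
  "mm_decomposition a b c K \<alpha> \<beta> \<gamma> \<longleftrightarrow>
     (\<forall>i<a. \<forall>j<b. \<forall>j'<b. \<forall>l<c. \<forall>i'<a. \<forall>l'<c.
        (\<Sum>k\<in>K. \<alpha> k i j * \<beta> k j' l * \<gamma> k i' l') =
        (if j = j' \<and> i = i' \<and> l = l' then 1 else 0))"

lemma mm_algorithm_of_decomposition:
  fixes \<alpha> \<beta> \<gamma> :: "'i \<Rightarrow> nat \<Rightarrow> nat \<Rightarrow> 'k::field"
  assumes "finite K" "mm_decomposition a b c K \<alpha> \<beta> \<gamma>"
  shows "\<exists>\<alpha>' \<beta>' \<gamma>'. mm_algorithm a b c (card K) (\<alpha>'::nat\<Rightarrow>nat\<Rightarrow>nat\<Rightarrow>'k) \<beta>' \<gamma>'"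
proof -
  obtain f where f: "bij_betw f {..<card K} K"
    using ex_bij_betw_nat_finite[OF assms(1)] by (auto simp: atLeast0LessThan)
  have "mm_algorithm a b c (card K) (\<lambda>k. \<alpha> (f k)) (\<lambda>k. \<beta> (f k)) (\<lambda>k. \<gamma> (f k))"
    using assms(2) unfolding mm_algorithm_def mm_decomposition_def
    by (simp only: sum.reindex_bij_betw[OF f, symmetric])
  then show ?thesis by blast
qed

lemma mm_rank_le_card:
  fixes \<alpha> \<beta> \<gamma> :: "'i \<Rightarrow> nat \<Rightarrow> nat \<Rightarrow> 'k::field"
  assumes "finite K" "mm_decomposition a b c K \<alpha> \<beta> \<gamma>"
  shows "mm_rank TYPE('k) a b c \<le> card K"
  using mm_algorithm_of_decomposition[OF assms] unfolding mm_rank_def by (auto intro: Least_le)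

lemma mm_decomposition_naive:
  "mm_decomposition a b c ({..<a} \<times> {..<b} \<times> {..<c})
     (\<lambda>(p, q, s) i j. if i = p \<and> j = q then (1::'k::field) else 0)
     (\<lambda>(p, q, s) j l. if j = q \<and> l = s then 1 else 0)
     (\<lambda>(p, q, s) i l. if i = p \<and> l = s then 1 else 0)"
  unfolding mm_decomposition_def
proof (intro allI impI, goal_cases)
  case (1 i j j' l i' l')
  then show ?case
    by (subst sum.cong[OF refl,
          where h = "\<lambda>k. if k = (i, j, l) then (if j = j' \<and> i = i' \<and> l = l' then 1 else 0) else 0"])
      (auto split: if_splits)
qed

lemma mm_rank_attained:
  "\<exists>\<alpha> \<beta> \<gamma>. mm_algorithm a b c (mm_rank TYPE('k::field) a b c) (\<alpha>::nat\<Rightarrow>nat\<Rightarrow>nat\<Rightarrow>'k) \<beta> \<gamma>"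
proof -
  have "\<exists>r \<alpha> \<beta> \<gamma>. mm_algorithm a b c r (\<alpha>::nat\<Rightarrow>nat\<Rightarrow>nat\<Rightarrow>'k) \<beta> \<gamma>"
    using mm_algorithm_of_decomposition[OF _ mm_decomposition_naive] by blast
  then show ?thesis unfolding mm_rank_def by (rule LeastI_ex)
qed

lemma mm_algorithm_rotate:
  assumes "mm_algorithm a b c r \<alpha> \<beta> \<gamma>"
  shows "mm_algorithm b c a r \<beta> (\<lambda>k l i. \<gamma> k i l) (\<lambda>k j i. \<alpha> k i j)"
  unfolding mm_algorithm_def
proof (intro allI impI)
  fix j l l' i j' i'
  assume "j < b" "l < c" "l' < c" "i < a" "j' < b" "i' < a"
  then have "(\<Sum>k<r. \<alpha> k i' j' * \<beta> k j l * \<gamma> k i l') = (if j' = j \<and> i' = i \<and> l = l' then 1 else 0)"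
    using assms unfolding mm_algorithm_def by blast
  then show "(\<Sum>k<r. \<beta> k j l * \<gamma> k i l' * \<alpha> k i' j') = (if l = l' \<and> j = j' \<and> i = i' then 1 else 0)"
    by (simp add: mult_ac conj_ac eq_commute[of j' j] eq_commute[of i' i] cong: if_cong)
qed

lemma mm_rank_rotate_le: "mm_rank TYPE('k::field) b c a \<le> mm_rank TYPE('k) a b c"
proof -
  obtain \<alpha> \<beta> \<gamma> where "mm_algorithm a b c (mm_rank TYPE('k) a b c) (\<alpha>::nat\<Rightarrow>nat\<Rightarrow>nat\<Rightarrow>'k) \<beta> \<gamma>"
    using mm_rank_attained by blast
  then have "\<exists>\<alpha> \<beta> \<gamma>. mm_algorithm b c a (mm_rank TYPE('k) a b c) (\<alpha>::nat\<Rightarrow>nat\<Rightarrow>nat\<Rightarrow>'k) \<beta> \<gamma>"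
    by (blast dest: mm_algorithm_rotate)
  then show ?thesis unfolding mm_rank_def[of _ b c a] by (rule Least_le)
qed

definition zero_pad :: "(nat \<Rightarrow> nat \<Rightarrow> nat \<Rightarrow> 'k::zero) \<Rightarrow> nat \<Rightarrow> nat \<Rightarrow> nat \<Rightarrow> nat \<Rightarrow> nat \<Rightarrow> 'k" where
  "zero_pad f p q k x y = (if x < p \<and> y < q then f k x y else 0)"

lemma mm_algorithm_zero_pad_sum:
  assumes "mm_algorithm p q s r \<alpha> \<beta> \<gamma>"
  shows "(\<Sum>k<r. zero_pad \<alpha> p q k i j * zero_pad \<beta> q s k j' l * zero_pad \<gamma> p s k i' l') =
    (if i < p \<and> j < q \<and> l < s \<and> j = j' \<and> i = i' \<and> l = l' then 1 else 0)"
proof (cases "i < p \<and> j < q \<and> j' < q \<and> l < s \<and> i' < p \<and> l' < s")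
  case True
  then show ?thesis using assms unfolding mm_algorithm_def zero_pad_def by auto
next
  case False
  then show ?thesis unfolding zero_pad_def by auto
qed

definition block_of :: "nat \<Rightarrow> nat \<Rightarrow> nat" where
  "block_of u i = (if i < u then 0 else 1)"

definition block_offset :: "nat \<Rightarrow> nat \<Rightarrow> nat" where
  "block_offset u i = (if i < u then i else i - u)"

lemma block_of_less_2: "block_of u i < 2"
  by (simp add: block_of_def)

lemma block_offset_less:
  "i < u + v \<Longrightarrow> block_offset u i < (if block_of u i = 0 then u else v)"
  by (auto simp: block_of_def block_offset_def)

lemma block_index_eq_iff:
  "i < u + v \<Longrightarrow> i' < u + v \<Longrightarrow>
     i = i' \<longleftrightarrow> block_of u i = block_of u i' \<and> block_offset u i = block_offset u i'"
  by (auto simp: block_of_def block_offset_def)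

text \<open>Strassen's algorithm, block \<open>(x, y)\<close> being entry \<open>2 x + y\<close> of a row. The flags
  record which of the three dimensions of product \<open>m\<close> must be the larger block size \<open>u\<close>
  (see \<open>strassen_support\<close>); the others can be the smaller size \<open>v\<close>.\<close>

definition strassen_A :: "nat \<Rightarrow> nat \<Rightarrow> nat \<Rightarrow> int" where
  "strassen_A m x y = [[1,0,0,1],[0,0,1,1],[1,0,0,0],[0,0,0,1],[1,1,0,0],[-1,0,1,0],[0,1,0,-1]] ! m ! (2*x+y)"

definition strassen_B :: "nat \<Rightarrow> nat \<Rightarrow> nat \<Rightarrow> int" where
  "strassen_B m x y = [[1,0,0,1],[1,0,0,0],[0,1,0,-1],[-1,0,1,0],[0,0,0,1],[1,1,0,0],[0,0,1,1]] ! m ! (2*x+y)"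

definition strassen_C :: "nat \<Rightarrow> nat \<Rightarrow> nat \<Rightarrow> int" where
  "strassen_C m x y = [[1,0,0,1],[0,0,1,-1],[0,1,0,1],[1,0,1,0],[-1,1,0,0],[0,0,0,1],[1,0,0,0]] ! m ! (2*x+y)"

definition strassen_rows_large :: "nat \<Rightarrow> bool" where
  "strassen_rows_large m = [True,False,True,False,True,False,True] ! m"

definition strassen_inner_large :: "nat \<Rightarrow> bool" where
  "strassen_inner_large m = [True,True,True,False,False,True,False] ! m"

definition strassen_cols_large :: "nat \<Rightarrow> bool" where
  "strassen_cols_large m = [True,True,False,True,False,False,True] ! m"

lemma less_2_cases: "(x::nat) < 2 \<longleftrightarrow> x = 0 \<or> x = 1" by auto

lemma less_7_cases: "(m::nat) < 7 \<longleftrightarrow> m = 0 \<or> m = 1 \<or> m = 2 \<or> m = 3 \<or> m = 4 \<or> m = 5 \<or> m = 6"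
  by auto

lemma strassen_identity:
  assumes "x < 2" "y < 2" "y' < 2" "z < 2" "x' < 2" "z' < 2"
  shows "(\<Sum>m<7. strassen_A m x y * strassen_B m y' z * strassen_C m x' z')
    = (if y = y' \<and> x = x' \<and> z = z' then 1 else 0)"
  using assms unfolding less_2_cases
  by (auto simp: strassen_A_def strassen_B_def strassen_C_def eval_nat_numeral)

lemma strassen_support:
  assumes "m < 7" "x < 2" "y < 2" "y' < 2" "z < 2" "x' < 2" "z' < 2"
    "strassen_A m x y * strassen_B m y' z * strassen_C m x' z' \<noteq> 0"
  shows "(strassen_rows_large m \<or> x = 1 \<or> x' = 1) \<and> (strassen_inner_large m \<or> y = 1 \<or> y' = 1)
    \<and> (strassen_cols_large m \<or> z = 1 \<or> z' = 1)"
  using assms unfolding less_2_cases less_7_cases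
  by (auto simp: strassen_A_def strassen_B_def strassen_C_def
      strassen_rows_large_def strassen_inner_large_def strassen_cols_large_def)

lemma common_offset_less:
  fixes u v a x x' :: nat
  assumes "v < u" "a < (if x = 0 then u else v)" "a < (if x' = 0 then u else v)"
    "large \<or> x = 1 \<or> x' = 1"
  shows "a < (if large then u else v)"
  using assms by (cases large; cases "x = 0"; cases "x' = 0") auto

definition strassen_rows :: "nat \<Rightarrow> nat \<Rightarrow> nat \<Rightarrow> nat" where
  "strassen_rows u v m = (if strassen_rows_large m then u else v)"

definition strassen_inner :: "nat \<Rightarrow> nat \<Rightarrow> nat \<Rightarrow> nat" where
  "strassen_inner u v m = (if strassen_inner_large m then u else v)"

definition strassen_cols :: "nat \<Rightarrow> nat \<Rightarrow> nat \<Rightarrow> nat" where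
  "strassen_cols u v m = (if strassen_cols_large m then u else v)"

lemma strassen_block_product_fits:
  assumes "v < u" "m < 7"
    and "i < u + v" "j < u + v" "j' < u + v" "l < u + v" "i' < u + v" "l' < u + v"
    and "block_offset u i = block_offset u i'" "block_offset u j = block_offset u j'"
      "block_offset u l = block_offset u l'"
    and "strassen_A m (block_of u i) (block_of u j) * strassen_B m (block_of u j') (block_of u l)
      * strassen_C m (block_of u i') (block_of u l') \<noteq> 0"
  shows "block_offset u i < strassen_rows u v m \<and> block_offset u j < strassen_inner u v m
    \<and> block_offset u l < strassen_cols u v m"
proof -
  note support = strassen_support[OF assms(2) block_of_less_2 block_of_less_2 block_of_less_2
      block_of_less_2 block_of_less_2 block_of_less_2 assms(12)]
  show ?thesis
    unfolding strassen_rows_def strassen_inner_def strassen_cols_def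
    using common_offset_less[OF assms(1)] support assms(9-11)
      block_offset_less[OF assms(3)] block_offset_less[OF assms(4)] block_offset_less[OF assms(5)]
      block_offset_less[OF assms(6)] block_offset_less[OF assms(7)] block_offset_less[OF assms(8)]
    by metis
qed

definition block_factor :: "(nat \<Rightarrow> nat \<Rightarrow> nat \<Rightarrow> int) \<Rightarrow> (nat \<Rightarrow> nat \<Rightarrow> nat \<Rightarrow> nat \<Rightarrow> 'k::ring_1) \<Rightarrow>
    (nat \<Rightarrow> nat) \<Rightarrow> (nat \<Rightarrow> nat) \<Rightarrow> nat \<Rightarrow> nat \<times> nat \<Rightarrow> nat \<Rightarrow> nat \<Rightarrow> 'k" where
  "block_factor S f p q u = (\<lambda>(m, k) x y. of_int (S m (block_of u x) (block_of u y))
     * zero_pad (f m) (p m) (q m) k (block_offset u x) (block_offset u y))"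

lemma sum_block_factor_Sigma:
  fixes f g h :: "nat \<Rightarrow> nat \<Rightarrow> nat \<Rightarrow> nat \<Rightarrow> 'k::field"
  assumes "\<And>m. mm_algorithm (p m) (q m) (s m) (r m) (f m) (g m) (h m)"
  shows "(\<Sum>k\<in>(SIGMA m:{..<n}. {..<r m}).
      block_factor F f p q u k i j * block_factor G g q s u k j' l * block_factor H h p s u k i' l')
    = (\<Sum>m<n. of_int (F m (block_of u i) (block_of u j) * G m (block_of u j') (block_of u l)
        * H m (block_of u i') (block_of u l'))
      * (if block_offset u i < p m \<and> block_offset u j < q m \<and> block_offset u l < s m
          \<and> block_offset u j = block_offset u j' \<and> block_offset u i = block_offset u i'
          \<and> block_offset u l = block_offset u l' then 1 else 0))"
proof -
  let ?off = "block_offset u"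
  have "(\<Sum>k\<in>(SIGMA m:{..<n}. {..<r m}).
      block_factor F f p q u k i j * block_factor G g q s u k j' l * block_factor H h p s u k i' l')
    = (\<Sum>m<n. of_int (F m (block_of u i) (block_of u j) * G m (block_of u j') (block_of u l)
        * H m (block_of u i') (block_of u l'))
      * (\<Sum>k<r m. zero_pad (f m) (p m) (q m) k (?off i) (?off j)
        * zero_pad (g m) (q m) (s m) k (?off j') (?off l) * zero_pad (h m) (p m) (s m) k (?off i') (?off l')))"
    unfolding block_factor_def sum_distrib_left
    by (subst sum.Sigma) (auto simp: mult_ac intro!: sum.cong)
  then show ?thesis
    unfolding mm_algorithm_zero_pad_sum[OF assms] by (simp add: conj_ac)
qed

lemma mm_decomposition_strassen_blocks:
  fixes f g h :: "nat \<Rightarrow> nat \<Rightarrow> nat \<Rightarrow> nat \<Rightarrow> 'k::field"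
  assumes "v < u"
    and alg: "\<And>m. mm_algorithm (strassen_rows u v m) (strassen_inner u v m) (strassen_cols u v m)
      (r m) (f m) (g m) (h m)"
  shows "mm_decomposition (u + v) (u + v) (u + v) (SIGMA m:{..<7}. {..<r m})
    (block_factor strassen_A f (strassen_rows u v) (strassen_inner u v) u)
    (block_factor strassen_B g (strassen_inner u v) (strassen_cols u v) u)
    (block_factor strassen_C h (strassen_rows u v) (strassen_cols u v) u)"
  unfolding mm_decomposition_def sum_block_factor_Sigma[OF alg]
proof (intro allI impI, goal_cases)
  case (1 i j j' l i' l')
  note idx = 1
  let ?blk = "block_of u" and ?off = "block_offset u"
  define co where "co m = strassen_A m (?blk i) (?blk j) * strassen_B m (?blk j') (?blk l)
    * strassen_C m (?blk i') (?blk l')" for m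
  define same_offsets where "same_offsets \<longleftrightarrow> ?off j = ?off j' \<and> ?off i = ?off i' \<and> ?off l = ?off l'"
  define fits where "fits m \<longleftrightarrow> ?off i < strassen_rows u v m \<and> ?off j < strassen_inner u v m
    \<and> ?off l < strassen_cols u v m" for m
  have "(\<Sum>m<7. of_int (co m) * (if fits m \<and> same_offsets then 1 else 0))
    = (if j = j' \<and> i = i' \<and> l = l' then 1 else (0::'k))"
  proof (cases same_offsets)
    case False
    then show ?thesis unfolding same_offsets_def by auto
  next
    case True
    have term_eq: "of_int (co m) * (if fits m \<and> same_offsets then 1 else 0) = (of_int (co m) :: 'k)"
      if "m \<in> {..<7}" for m
    proof (cases "co m = 0")
      case False
      then have "fits m"
        using strassen_block_product_fits[OF \<open>v < u\<close> _ idx] that True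
        unfolding co_def fits_def same_offsets_def by blast
      then show ?thesis using True by simp
    qed simp
    have "(\<Sum>m<7. of_int (co m) * (if fits m \<and> same_offsets then 1 else 0))
      = (\<Sum>m<7. of_int (co m) :: 'k)"
      using term_eq by (rule sum.cong[OF refl])
    also have "\<dots> = of_int (\<Sum>m<7. co m)"
      by simp
    also have "\<dots> = (if ?blk j = ?blk j' \<and> ?blk i = ?blk i' \<and> ?blk l = ?blk l' then 1 else 0)"
      unfolding co_def by (simp add: strassen_identity block_of_less_2)
    also have "\<dots> = (if j = j' \<and> i = i' \<and> l = l' then 1 else 0)"
      using True block_index_eq_iff idx unfolding same_offsets_def by auto
    finally show ?thesis .
  qed
  then show ?case
    unfolding co_def fits_def same_offsets_def by (simp add: conj_assoc)
qed

lemma mm_rank_strassen_blocks_le: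
  assumes "v < u"
  shows "mm_rank TYPE('k::field) (u + v) (u + v) (u + v)
    \<le> (\<Sum>m<7. mm_rank TYPE('k) (strassen_rows u v m) (strassen_inner u v m) (strassen_cols u v m))"
proof -
  define r where "r m = mm_rank TYPE('k) (strassen_rows u v m) (strassen_inner u v m) (strassen_cols u v m)"
    for m
  have "\<forall>m. \<exists>\<alpha> \<beta> \<gamma>. mm_algorithm (strassen_rows u v m) (strassen_inner u v m)
      (strassen_cols u v m) (r m) \<alpha> \<beta> (\<gamma> :: nat \<Rightarrow> nat \<Rightarrow> nat \<Rightarrow> 'k)"
    unfolding r_def using mm_rank_attained by blast
  then obtain f g h where "\<And>m. mm_algorithm (strassen_rows u v m) (strassen_inner u v m)
      (strassen_cols u v m) (r m) (f m) (g m) (h m :: nat \<Rightarrow> nat \<Rightarrow> nat \<Rightarrow> 'k)"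
    by metis
  from mm_rank_le_card[OF _ mm_decomposition_strassen_blocks[OF assms this]]
  show ?thesis unfolding r_def by simp
qed

theorem proposition1:
  fixes u v :: nat
  assumes "u > v" and "v \<ge> 1"
  shows "mm_rank TYPE('k::field) (u+v) (u+v) (u+v)
           \<le> mm_rank TYPE('k) u u u + 3 * mm_rank TYPE('k) u u v
              + 3 * mm_rank TYPE('k) v v u"
proof -
  let ?R = "mm_rank TYPE('k)"
  have "(\<Sum>m<7. ?R (strassen_rows u v m) (strassen_inner u v m) (strassen_cols u v m))
     = ?R u u u + ?R v u u + ?R u u v + ?R v v u + ?R u v v + ?R v u v + ?R u v u"
    by (simp add: eval_nat_numeral strassen_rows_def strassen_inner_def strassen_cols_def
        strassen_rows_large_def strassen_inner_large_def strassen_cols_large_def)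
  moreover have "?R u v u \<le> ?R u u v" "?R v u u \<le> ?R u v u"
    "?R v u v \<le> ?R v v u" "?R u v v \<le> ?R v u v"
    by (rule mm_rank_rotate_le)+
  ultimately show ?thesis
    using mm_rank_strassen_blocks_le[OF assms(1), where 'k='k] by linarith
qed

end
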